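(* Let $G$ be an oriented graph. A set $I\subseteq V(G)$ is an oriented independent set if and only if no two vertices of $I$ are adjacent and no two vertices of $I$ are connected by a directed $2$-path.
   Context: An oriented graph is a finite directed graph with no directed cycle of length 1 or 2. An oriented coloring of $G$ is a map $f$ from $V(G)$ to a set of colors such that (i) $f(x)\neq f(y)$ for every arc $xy$, and (ii) for all arcs $xy, zw$, $f(y)=f(z)$ implies $f(x)\neq f(w)$. A set $I\subseteq V(G)$ is an oriented independent set if for every two distinct $x,y\in I$ there is an oriented coloring $f$ of $G$ with $f(x)=f(y)$. Vertices $x,y$ are connected by a directed $2$-path if for some vertex $v$, $xv$ and $vy$ are arcs, or $yv$ and $vx$ are arcs. *)

theory Defs
  imports Main
begin

definition oriented_graph :: "'a set \<Rightarrow> ('a \<times> 'a) set \<Rightarrow> bool" where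
  "oriented_graph V A \<longleftrightarrow> finite V \<and> A \<subseteq> V \<times> V \<and>
     (\<forall>x. (x, x) \<notin> A) \<and> (\<forall>x y. (x, y) \<in> A \<longrightarrow> (y, x) \<notin> A)"

text \<open>Oriented colouring with colours taken from nat (a countable colour
  supply suffices for finite graphs).\<close>
definition oriented_coloring :: "'a set \<Rightarrow> ('a \<times> 'a) set \<Rightarrow> ('a \<Rightarrow> nat) \<Rightarrow> bool" where
  "oriented_coloring V A f \<longleftrightarrow>
     (\<forall>x y. (x, y) \<in> A \<longrightarrow> f x \<noteq> f y) \<and>
     (\<forall>x y z w. (x, y) \<in> A \<longrightarrow> (z, w) \<in> A \<longrightarrow> f y = f z \<longrightarrow> f x \<noteq> f w)"

definition oriented_independent :: "'a set \<Rightarrow> ('a \<times> 'a) set \<Rightarrow> 'a set \<Rightarrow> bool" where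
  "oriented_independent V A I \<longleftrightarrow> I \<subseteq> V \<and>
     (\<forall>x\<in>I. \<forall>y\<in>I. x \<noteq> y \<longrightarrow> (\<exists>f. oriented_coloring V A f \<and> f x = f y))"

definition adjacent :: "('a \<times> 'a) set \<Rightarrow> 'a \<Rightarrow> 'a \<Rightarrow> bool" where
  "adjacent A x y \<longleftrightarrow> (x, y) \<in> A \<or> (y, x) \<in> A"

definition directed_2path :: "('a \<times> 'a) set \<Rightarrow> 'a \<Rightarrow> 'a \<Rightarrow> bool" where
  "directed_2path A x y \<longleftrightarrow> (\<exists>v. ((x, v) \<in> A \<and> (v, y) \<in> A) \<or> ((y, v) \<in> A \<and> (v, x) \<in> A))"

end

theory Submission
  imports Defs
begin

text \<open>A colour class of an oriented colouring contains neither an arc nor the two ends of a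
  directed 2-path, since both would violate the colouring conditions. Conversely, in an oriented
  graph every injective colouring is oriented, and identifying the colours of two vertices that
  are neither adjacent nor joined by a directed 2-path keeps it oriented: any violation would
  have to use both vertices and so exhibit an arc or a directed 2-path between them.\<close>

lemma oriented_coloring_imp_not_adjacent:
  assumes "oriented_coloring V A f" and "f x = f y"
  shows "\<not> adjacent A x y"
  using assms unfolding oriented_coloring_def adjacent_def by metis

lemma oriented_coloring_imp_not_directed_2path:
  assumes "oriented_coloring V A f" and "f x = f y"
  shows "\<not> directed_2path A x y"
  using assms unfolding oriented_coloring_def directed_2path_def by metis

lemma fun_upd_identify_eq_iff:
  assumes "inj_on g V" and "x \<in> V" "y \<in> V" "u \<in> V" "w \<in> V"
  shows "(g(y := g x)) u = (g(y := g x)) w \<longleftrightarrow> u = w \<or> {u, w} = {x, y}"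
  using assms unfolding inj_on_def by (auto simp: doubleton_eq_iff)

lemma oriented_coloring_identify:
  assumes graph: "oriented_graph V A" and inj: "inj_on g V"
    and "x \<in> V" "y \<in> V" and not_adj: "\<not> adjacent A x y" and no_path: "\<not> directed_2path A x y"
  shows "oriented_coloring V A (g(y := g x))"
proof -
  let ?f = "g(y := g x)"
  have no_loop: "(a, a) \<notin> A" and no_2cycle: "(a, b) \<in> A \<Longrightarrow> (b, a) \<notin> A" for a b
    using graph unfolding oriented_graph_def by auto
  have ends_in_V: "a \<in> V" "b \<in> V" if "(a, b) \<in> A" for a b
    using graph that unfolding oriented_graph_def by auto
  note same_colour = fun_upd_identify_eq_iff[OF inj \<open>x \<in> V\<close> \<open>y \<in> V\<close>]
  have arc_colours: "?f a \<noteq> ?f b" if "(a, b) \<in> A" for a b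
    using same_colour[OF ends_in_V[OF that]] that no_loop not_adj
    unfolding adjacent_def doubleton_eq_iff by metis
  have path_colours: "?f a \<noteq> ?f d" if "(a, b) \<in> A" "(c, d) \<in> A" "?f b = ?f c" for a b c d
  proof
    assume "?f a = ?f d"
    then have "a = d \<or> {a, d} = {x, y}" and "b = c \<or> {b, c} = {x, y}"
      using same_colour ends_in_V that by auto
    then show False
      using that(1,2) no_loop no_2cycle not_adj no_path
      unfolding adjacent_def directed_2path_def doubleton_eq_iff by metis
  qed
  show ?thesis
    unfolding oriented_coloring_def using arc_colours path_colours by blast
qed

theorem proposition3:
  fixes V :: "'a set" and A :: "('a \<times> 'a) set" and I :: "'a set"
  assumes "oriented_graph V A" and "I \<subseteq> V"
  shows "oriented_independent V A I \<longleftrightarrow>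
    (\<forall>x\<in>I. \<forall>y\<in>I. x \<noteq> y \<longrightarrow> \<not> adjacent A x y \<and> \<not> directed_2path A x y)"
proof
  assume "oriented_independent V A I"
  then show "\<forall>x\<in>I. \<forall>y\<in>I. x \<noteq> y \<longrightarrow> \<not> adjacent A x y \<and> \<not> directed_2path A x y"
    unfolding oriented_independent_def
    using oriented_coloring_imp_not_adjacent oriented_coloring_imp_not_directed_2path by metis
next
  assume separated: "\<forall>x\<in>I. \<forall>y\<in>I. x \<noteq> y \<longrightarrow> \<not> adjacent A x y \<and> \<not> directed_2path A x y"
  obtain g :: "'a \<Rightarrow> nat" where inj: "inj_on g V"
    using assms(1) finite_imp_inj_to_nat_seg unfolding oriented_graph_def by metis
  show "oriented_independent V A I"
    unfolding oriented_independent_def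
  proof (intro conjI ballI impI)
    fix x y assume "x \<in> I" "y \<in> I" "x \<noteq> y"
    then have "oriented_coloring V A (g(y := g x))"
      using oriented_coloring_identify[OF assms(1) inj, of x y] separated assms(2) by auto
    with \<open>x \<noteq> y\<close> show "\<exists>f. oriented_coloring V A f \<and> f x = f y"
      by (intro exI[of _ "g(y := g x)"]) simp
  qed (rule assms(2))
qed

end
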